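(* Consider the caching network and the backhaul-eavesdropper scenario $S_1$ described in the context, with every user served by exactly one SBS ($\gamma_1=1$), and a placement $\mathbf{m}=(m_1,\dots,m_N)$ of integers $0\le m_j\le n$ filling the caches, i.e., $\sum_{j=1}^N m_j = nM$. If the network is secure in scenario $S_1$, then $$M > N - \frac{\eta}{Q},\qquad \text{where } \eta\triangleq\sum_{j=1}^N \frac{1}{p_j}.$$
   Context: A macro base station (MBS) has access to a library of $N$ files $F_1,\dots,F_N$; file $F_j$ is requested with probability $p_j>0$, $\sum_j p_j=1$. There are $N_{\text{SBS}}$ small-cell base stations (SBSs), each with a cache of size $M$ files. Each file is split into $n$ fragments and encoded with a code such that any $n$ distinct encoded packets of a file suffice to recover it, while fewer than $n$ distinct packets do not allow recovery. A placement $\mathbf{m}$ means each SBS stores $m_j$ encoded packets of $F_j$, with packets stored at different SBSs all distinct. A user is served by exactly $d$ SBSs with probability $\gamma_d$, $d=1,\dots,S$. A user requesting $F_j$ and served by $d$ SBSs receives $d m_j$ distinct packets from them, and the MBS sends the missing $n(1-\min(1,d m_j/n))$ new distinct packets over the backhaul. Scenario $S_1$: each SBS receives $Q>0$ requests during delivery, $Q p_j$ of them for $F_j$; an eavesdropper intercepts all packets sent over one MBS-to-SBS link, collecting $P_j=\sum_{d=1}^{S} Q\gamma_d p_j\, n(1-\min(1,d m_j/n))$ distinct packets of $F_j$. The network is secure in scenario $S_1$ if $P_j<n$ for all $j$. *)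

theory Defs
  imports Complex_Main
begin

text \<open>Number of distinct packets of file j collected by the eavesdropper on one
MBS-to-SBS link in scenario S1 (files indexed 1..N, d ranges over 1..S).\<close>
definition eaves_packets ::
  "real \<Rightarrow> nat \<Rightarrow> (nat \<Rightarrow> real) \<Rightarrow> (nat \<Rightarrow> real) \<Rightarrow> nat \<Rightarrow> (nat \<Rightarrow> nat) \<Rightarrow> nat \<Rightarrow> real" where
  "eaves_packets Q S \<gamma> p n m j =
     (\<Sum>d=1..S. Q * \<gamma> d * p j * real n * (1 - min 1 (real d * real (m j) / real n)))"

definition secure_S1 ::
  "nat \<Rightarrow> real \<Rightarrow> nat \<Rightarrow> (nat \<Rightarrow> real) \<Rightarrow> (nat \<Rightarrow> real) \<Rightarrow> nat \<Rightarrow> (nat \<Rightarrow> nat) \<Rightarrow> bool" where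
  "secure_S1 N Q S \<gamma> p n m = (\<forall>j\<in>{1..N}. eaves_packets Q S \<gamma> p n m j < real n)"

end

theory Submission
  imports Defs
begin

text \<open>With every user served by a single SBS, the eavesdropper sees exactly the
\<open>Q p\<^sub>j (n - m\<^sub>j)\<close> packets of \<open>F\<^sub>j\<close> the MBS has to send, so security gives
\<open>n - m\<^sub>j < n / (Q p\<^sub>j)\<close> for every file. Summing over the files and using
\<open>\<Sum>\<^sub>j m\<^sub>j = n M\<close> yields \<open>n (N - M) < n \<eta> / Q\<close>.\<close>

lemma distribution_concentrated_at_1:
  fixes \<gamma> :: "nat \<Rightarrow> real"
  assumes "S \<ge> 1" and "\<forall>d\<in>{1..S}. \<gamma> d \<ge> 0" and "(\<Sum>d=1..S. \<gamma> d) = 1" and "\<gamma> 1 = 1"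
  shows "\<forall>d\<in>{2..S}. \<gamma> d = 0"
proof -
  have "{1..S} = insert 1 {2..S}" using assms(1) by auto
  with assms(3,4) have "(\<Sum>d=2..S. \<gamma> d) = 0" by simp
  with assms(2) show ?thesis by (subst (asm) sum_nonneg_eq_0_iff) auto
qed

lemma eaves_packets_single_SBS:
  assumes "S \<ge> 1" and "\<forall>d\<in>{2..S}. \<gamma> d = 0" and "\<gamma> 1 = 1"
    and "n \<ge> 1" and "m j \<le> n"
  shows "eaves_packets Q S \<gamma> p n m j = Q * p j * (real n - real (m j))"
proof -
  have "{1..S} = insert 1 {2..S}" using assms(1) by auto
  moreover have "min 1 (real (m j) / real n) = real (m j) / real n"
    using assms(4,5) by (simp add: divide_simps)
  ultimately show ?thesis
    using assms(2-4) by (simp add: eaves_packets_def field_simps)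
qed

lemma secure_S1_missing_packets_bound:
  assumes "secure_S1 N Q S \<gamma> p n m" and "j \<in> {1..N}"
    and "eaves_packets Q S \<gamma> p n m j = Q * p j * (real n - real (m j))"
    and "Q > 0" and "p j > 0"
  shows "real n - real (m j) < real n / (Q * p j)"
proof -
  have "Q * p j * (real n - real (m j)) < real n"
    using assms(1-3) unfolding secure_S1_def by metis
  with assms(4,5) show ?thesis by (simp add: pos_less_divide_eq mult.commute)
qed

theorem corollary2:
  fixes N S n :: nat and M Q :: real and p \<gamma> :: "nat \<Rightarrow> real" and m :: "nat \<Rightarrow> nat"
  assumes p_pos: "\<forall>j\<in>{1..N}. p j > 0"
    and p_sum: "(\<Sum>j=1..N. p j) = 1"
    and n_pos: "n \<ge> 1"
    and S_pos: "S \<ge> 1"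
    and \<gamma>_nonneg: "\<forall>d\<in>{1..S}. \<gamma> d \<ge> 0"
    and \<gamma>_sum: "(\<Sum>d=1..S. \<gamma> d) = 1"
    and \<gamma>_1: "\<gamma> 1 = 1"
    and Q_pos: "Q > 0"
    and m_le: "\<forall>j\<in>{1..N}. m j \<le> n"
    and m_fill: "real (\<Sum>j=1..N. m j) = real n * M"
    and secure: "secure_S1 N Q S \<gamma> p n m"
  shows "M > real N - (\<Sum>j=1..N. 1 / p j) / Q"
proof -
  have \<gamma>_rest: "\<forall>d\<in>{2..S}. \<gamma> d = 0"
    using distribution_concentrated_at_1[OF S_pos \<gamma>_nonneg \<gamma>_sum \<gamma>_1] .
  have missing: "real n - real (m j) < real n / (Q * p j)" if "j \<in> {1..N}" for j
    using that secure Q_pos p_pos m_le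
      eaves_packets_single_SBS[OF S_pos \<gamma>_rest \<gamma>_1 n_pos, of m j Q p]
    by (intro secure_S1_missing_packets_bound) auto
  have "{1..N} \<noteq> {}" using p_sum by (cases N) auto
  then have "(\<Sum>j=1..N. real n - real (m j)) < (\<Sum>j=1..N. real n / (Q * p j))"
    using missing by (intro sum_strict_mono) auto
  moreover have "(\<Sum>j=1..N. real n - real (m j)) = real n * (real N - M)"
    using m_fill by (simp add: sum_subtractf algebra_simps)
  moreover have "(\<Sum>j=1..N. real n / (Q * p j)) = real n * ((\<Sum>j=1..N. 1 / p j) / Q)"
    by (simp add: sum_distrib_left sum_divide_distrib mult.commute)
  ultimately have "real n * (real N - M) < real n * ((\<Sum>j=1..N. 1 / p j) / Q)" by simp
  then have "real N - M < (\<Sum>j=1..N. 1 / p j) / Q"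
    using n_pos by (metis mult_less_cancel_left_pos of_nat_0_less_iff less_le_trans zero_less_one)
  then show ?thesis by simp
qed

end
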